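(* Let $R$ be an integral domain which is a Hilbert ring. Then every radical ideal $I$ of $R[X]$ which is a finite intersection of G-ideals of $R[X]$ is power stable.
   Context: A ring is a Hilbert ring if every prime ideal is an intersection of maximal ideals. A prime ideal $Q$ of a ring $A$ is a G-ideal if the fraction field of $A/Q$ is finitely generated as an algebra over $A/Q$. An ideal $I$ of the polynomial ring $R[X]$ over an integral domain $R$ is called power stable if $I^t\cap R = (I\cap R)^t$ for all integers $t\geq 1$. *)

theory Defs
  imports "HOL-Computational_Algebra.Polynomial"
begin

definition is_ideal :: "'a::comm_ring_1 set \<Rightarrow> bool" where
  "is_ideal I \<longleftrightarrow> 0 \<in> I \<and> (\<forall>x\<in>I. \<forall>y\<in>I. x + y \<in> I) \<and> (\<forall>r. \<forall>x\<in>I. r * x \<in> I)"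

definition prime_ideal :: "'a::comm_ring_1 set \<Rightarrow> bool" where
  "prime_ideal P \<longleftrightarrow> is_ideal P \<and> P \<noteq> UNIV \<and> (\<forall>a b. a * b \<in> P \<longrightarrow> a \<in> P \<or> b \<in> P)"

definition maximal_ideal :: "'a::comm_ring_1 set \<Rightarrow> bool" where
  "maximal_ideal M \<longleftrightarrow> is_ideal M \<and> M \<noteq> UNIV \<and>
     (\<forall>J. is_ideal J \<and> M \<subseteq> J \<longrightarrow> J = M \<or> J = UNIV)"

definition radical_ideal :: "'a::comm_ring_1 set \<Rightarrow> bool" where
  "radical_ideal I \<longleftrightarrow> is_ideal I \<and> (\<forall>x n. x ^ n \<in> I \<longrightarrow> x \<in> I)"

definition hilbert_ring :: "'a::comm_ring_1 itself \<Rightarrow> bool" where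
  "hilbert_ring _ \<longleftrightarrow> (\<forall>P::'a set. prime_ideal P \<longrightarrow>
      (\<exists>S. (\<forall>M\<in>S. maximal_ideal M) \<and> P = \<Inter>S))"

definition ideal_gen :: "'a::comm_ring_1 set \<Rightarrow> 'a set" where
  "ideal_gen S = \<Inter>{J. is_ideal J \<and> S \<subseteq> J}"

definition ideal_prod :: "'a::comm_ring_1 set \<Rightarrow> 'a set \<Rightarrow> 'a set" where
  "ideal_prod I J = ideal_gen {a * b | a b. a \<in> I \<and> b \<in> J}"

fun ideal_pow :: "'a::comm_ring_1 set \<Rightarrow> nat \<Rightarrow> 'a set" where
  "ideal_pow I 0 = UNIV"
| "ideal_pow I (Suc n) = ideal_prod (ideal_pow I n) I"

text \<open>The fraction field of \<open>A/Q\<close> (for a prime ideal \<open>Q\<close>) is represented by pairs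
  \<open>(a,b)\<close> of elements of \<open>A\<close> with \<open>b \<notin> Q\<close> (standing for \<open>(a + Q)/(b + Q)\<close>), where
  \<open>(a,b)\<close> and \<open>(c,d)\<close> denote the same element iff \<open>a d - c b \<in> Q\<close>.\<close>

definition frac_dom :: "'a::comm_ring_1 set \<Rightarrow> ('a \<times> 'a) set" where
  "frac_dom Q = {(a, b). b \<notin> Q}"

definition frac_eq :: "'a::comm_ring_1 set \<Rightarrow> 'a \<times> 'a \<Rightarrow> 'a \<times> 'a \<Rightarrow> bool" where
  "frac_eq Q p q \<longleftrightarrow> fst p * snd q - fst q * snd p \<in> Q"

text \<open>Representatives of the \<open>A/Q\<close>-subalgebra of the fraction field generated by \<open>S\<close>.\<close>
inductive_set frac_alg :: "'a::comm_ring_1 set \<Rightarrow> ('a \<times> 'a) set \<Rightarrow> ('a \<times> 'a) set"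
  for Q S where
  base: "(a, 1) \<in> frac_alg Q S"
| gen: "s \<in> S \<Longrightarrow> s \<in> frac_alg Q S"
| add: "(a, b) \<in> frac_alg Q S \<Longrightarrow> (c, d) \<in> frac_alg Q S \<Longrightarrow> (a * d + c * b, b * d) \<in> frac_alg Q S"
| mult: "(a, b) \<in> frac_alg Q S \<Longrightarrow> (c, d) \<in> frac_alg Q S \<Longrightarrow> (a * c, b * d) \<in> frac_alg Q S"

definition G_ideal :: "'a::comm_ring_1 set \<Rightarrow> bool" where
  "G_ideal Q \<longleftrightarrow> prime_ideal Q \<and>
     (\<exists>S. finite S \<and> S \<subseteq> frac_dom Q \<and>
        (\<forall>p\<in>frac_dom Q. \<exists>q\<in>frac_alg Q S. frac_eq Q q p))"

definition contract :: "'a::comm_ring_1 poly set \<Rightarrow> 'a set" where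
  "contract I = {a. [:a:] \<in> I}"

definition power_stable :: "'a::idom poly set \<Rightarrow> bool" where
  "power_stable I \<longleftrightarrow> (\<forall>t::nat. t \<ge> 1 \<longrightarrow> contract (ideal_pow I t) = ideal_pow (contract I) t)"

end

theory Submission
  imports Defs
begin

(*
  Write q = Q \<inter> R (contract Q) and q[X] for the polynomials with coefficients in q.

  The inclusion (I \<inter> R)^t \<subseteq> I^t \<inter> R holds for every ideal.  For the converse we show, for a
  G-ideal Q, that q is maximal and Q^t \<inter> R \<subseteq> q^t; then
    I^t \<inter> R \<subseteq> \<Inter>_i (Q_i^t \<inter> R) \<subseteq> \<Inter>_i q_i^t \<subseteq> (\<Inter>_i q_i)^t = (I \<inter> R)^t,
  the last inclusion holding for finitely many maximal ideals (checked locally at every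
  maximal ideal of R).

  The analysis of a G-ideal Q:  a G-witness u (every b \<notin> Q divides a power of u modulo Q)
  shows Q \<noteq> q[X].  Fix p \<in> Q of least degree N outside q[X]; its leading coefficient is not
  in q, and every element outside Q divides, modulo Q, a constant outside q.  If q were not
  maximal, the Hilbert property yields a maximal M \<supset> q and a prime P \<supseteq> Q lying over M
  which must contain u, contradicting this for v = u.  Once q is maximal, p can be made
  monic, Q = f R[X] + q[X], hence Q^t \<subseteq> f R[X] + q^t[X], and a constant in the latter
  lies in q^t.
*)

section \<open>Ideals of a commutative ring\<close>

lemma idealD:
  assumes "is_ideal I"
  shows "0 \<in> I" "x \<in> I \<Longrightarrow> y \<in> I \<Longrightarrow> x + y \<in> I" "x \<in> I \<Longrightarrow> r * x \<in> I"
    "x \<in> I \<Longrightarrow> x * r \<in> I" "x \<in> I \<Longrightarrow> - x \<in> I" "x \<in> I \<Longrightarrow> y \<in> I \<Longrightarrow> x - y \<in> I"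
  using assms unfolding is_ideal_def
  by (metis mult.commute, blast, blast, metis mult.commute, metis mult_minus1,
      metis diff_conv_add_uminus mult_minus1)

lemma ideal_sum: "is_ideal I \<Longrightarrow> (\<And>i. i \<in> A \<Longrightarrow> f i \<in> I) \<Longrightarrow> sum f A \<in> I"
  by (induction A rule: infinite_finite_induct) (auto intro: idealD)

lemma ideal_prod_factor: "is_ideal I \<Longrightarrow> finite A \<Longrightarrow> i \<in> A \<Longrightarrow> f i \<in> I \<Longrightarrow> prod f A \<in> I"
  by (metis idealD(4) prod.remove)

lemma ideal_one: "is_ideal I \<Longrightarrow> 1 \<in> I \<Longrightarrow> I = UNIV"
  using idealD(3)[of I 1] by auto

lemma ideal_Inter: "(\<And>J. J \<in> S \<Longrightarrow> is_ideal J) \<Longrightarrow> is_ideal (\<Inter>S)"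
  unfolding is_ideal_def by (simp add: Inter_iff)

lemma ideal_colon: "is_ideal J \<Longrightarrow> is_ideal {y. \<forall>z\<in>Z. y * z \<in> J}"
  unfolding is_ideal_def by (auto simp: algebra_simps)

lemma ideal_colon_elem: "is_ideal J \<Longrightarrow> is_ideal {z. c * z \<in> J}"
  unfolding is_ideal_def by (auto simp: algebra_simps)

lemma ideal_gen_ideal: "is_ideal (ideal_gen S)"
  unfolding ideal_gen_def by (rule ideal_Inter) auto

lemma ideal_prod_mem: "a \<in> A \<Longrightarrow> b \<in> B \<Longrightarrow> a * b \<in> ideal_prod A B"
  unfolding ideal_prod_def ideal_gen_def by blast

lemma ideal_prod_ideal: "is_ideal (ideal_prod A B)"
  unfolding ideal_prod_def by (rule ideal_gen_ideal)

lemma ideal_prod_least: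
  "is_ideal C \<Longrightarrow> (\<And>a b. a \<in> A \<Longrightarrow> b \<in> B \<Longrightarrow> a * b \<in> C) \<Longrightarrow> ideal_prod A B \<subseteq> C"
  unfolding ideal_prod_def ideal_gen_def by blast

lemma ideal_UNIV: "is_ideal UNIV"
  by (simp add: is_ideal_def)

lemma ideal_pow_ideal: "is_ideal (ideal_pow I t)"
  by (cases t) (simp_all add: ideal_UNIV ideal_prod_ideal)

lemma ideal_pow_mono: "A \<subseteq> B \<Longrightarrow> ideal_pow A t \<subseteq> ideal_pow B t"
proof (induction t)
  case (Suc t)
  then show ?case
    by (auto intro!: ideal_prod_least[OF ideal_prod_ideal] ideal_prod_mem)
qed simp

lemma power_in_ideal_pow: "a \<in> A \<Longrightarrow> a ^ t \<in> ideal_pow A t"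
proof (induction t)
  case (Suc t)
  then have "a ^ t * a \<in> ideal_prod (ideal_pow A t) A" by (intro ideal_prod_mem)
  then show ?case by (simp add: mult.commute)
qed simp

lemma ideal_pow_mult:
  fixes A B C :: "'a::comm_ring_1 set"
  assumes iC: "is_ideal C" and AB: "\<And>a b. a \<in> A \<Longrightarrow> b \<in> B \<Longrightarrow> a * b \<in> C"
  shows "y \<in> ideal_pow A t \<Longrightarrow> z \<in> ideal_pow B t \<Longrightarrow> y * z \<in> ideal_pow C t"
proof (induction t arbitrary: y z)
  case (Suc t)
  let ?C = "ideal_pow C (Suc t)"
  have "ideal_prod (ideal_pow A t) A \<subseteq> {y. \<forall>z\<in>ideal_prod (ideal_pow B t) B. y * z \<in> ?C}"
  proof (rule ideal_prod_least[OF ideal_colon[OF ideal_pow_ideal]])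
    fix y1 a assume ya: "y1 \<in> ideal_pow A t" "a \<in> A"
    have "ideal_prod (ideal_pow B t) B \<subseteq> {z. (y1 * a) * z \<in> ?C}"
    proof (rule ideal_prod_least[OF ideal_colon_elem[OF ideal_pow_ideal]])
      fix z1 b assume zb: "z1 \<in> ideal_pow B t" "b \<in> B"
      have "(y1 * z1) * (a * b) \<in> ?C"
        using ideal_prod_mem[OF Suc.IH[OF ya(1) zb(1)] AB[OF ya(2) zb(2)]] by simp
      then show "z1 * b \<in> {z. (y1 * a) * z \<in> ?C}" by (simp add: algebra_simps)
    qed
    then show "y1 * a \<in> {y. \<forall>z\<in>ideal_prod (ideal_pow B t) B. y * z \<in> ?C}" by blast
  qed
  then show ?case using Suc.prems by auto
qed simp

lemma prime_ideal_D:
  assumes "prime_ideal P"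
  shows "is_ideal P" "1 \<notin> P" "a * b \<in> P \<Longrightarrow> a \<in> P \<or> b \<in> P"
  using assms ideal_one unfolding prime_ideal_def by blast+

lemma prime_power: "prime_ideal P \<Longrightarrow> x ^ n \<in> P \<Longrightarrow> x \<in> P"
  by (induction n) (auto dest: prime_ideal_D)

lemma prime_prod:
  assumes "prime_ideal P" "finite A" "\<And>i. i \<in> A \<Longrightarrow> f i \<notin> P"
  shows "prod f A \<notin> P"
  using assms(2,3)
proof (induction A rule: finite_induct)
  case (insert x F)
  then have "f x \<notin> P" "prod f F \<notin> P" by auto
  then show ?case using prime_ideal_D(3)[OF assms(1)] insert(1,2) by auto
qed (use prime_ideal_D(2)[OF assms(1)] in simp)

lemma maximal_ideal_is_ideal: "maximal_ideal M \<Longrightarrow> is_ideal M"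
  unfolding maximal_ideal_def by blast

lemma maximal_inv:
  assumes M: "maximal_ideal M" and c: "c \<notin> M"
  shows "\<exists>t. t * c - 1 \<in> M"
proof -
  have iM: "is_ideal M" using M by (rule maximal_ideal_is_ideal)
  define J where "J = {x + r * c | x r. x \<in> M}"
  have "is_ideal J" unfolding is_ideal_def
  proof (intro conjI ballI allI)
    show "0 \<in> J" unfolding J_def
      by (intro CollectI exI[of _ 0]) (use idealD(1)[OF iM] in auto)
  next
    fix x y assume "x \<in> J" "y \<in> J"
    then obtain x1 r1 x2 r2 where "x = x1 + r1 * c" "y = x2 + r2 * c" "x1 \<in> M" "x2 \<in> M"
      unfolding J_def by blast
    then show "x + y \<in> J" unfolding J_def
      by (intro CollectI exI[of _ "x1 + x2"] exI[of _ "r1 + r2"])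
         (auto intro: idealD[OF iM] simp: algebra_simps)
  next
    fix r x assume "x \<in> J"
    then obtain x1 r1 where "x = x1 + r1 * c" "x1 \<in> M" unfolding J_def by blast
    then show "r * x \<in> J" unfolding J_def
      by (intro CollectI exI[of _ "r * x1"] exI[of _ "r * r1"])
         (auto intro: idealD[OF iM] simp: algebra_simps)
  qed
  moreover have "M \<subseteq> J"
  proof
    fix x assume "x \<in> M"
    then show "x \<in> J" unfolding J_def by (intro CollectI exI[of _ x] exI[of _ 0]) simp
  qed
  moreover have "c \<in> J" unfolding J_def
    by (intro CollectI exI[of _ 0] exI[of _ 1]) (use idealD(1)[OF iM] in auto)
  ultimately have "J = UNIV" using M c unfolding maximal_ideal_def by blast
  then obtain x r where "1 = x + r * c" "x \<in> M" unfolding J_def by blast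
  then show ?thesis using idealD(5)[OF iM] by (metis add_diff_cancel_right' diff_add_cancel
        minus_diff_eq)
qed

lemma maximal_prime:
  assumes M: "maximal_ideal M" shows "prime_ideal M"
proof -
  have iM: "is_ideal M" using M by (rule maximal_ideal_is_ideal)
  have "a \<in> M \<or> b \<in> M" if "a * b \<in> M" for a b
  proof (rule ccontr)
    assume "\<not> (a \<in> M \<or> b \<in> M)"
    then obtain t where t: "t * a - 1 \<in> M" "b \<notin> M" using maximal_inv[OF M] by blast
    have "t * (a * b) - b * (t * a - 1) \<in> M"
      using idealD(3,6)[OF iM] that t(1) by blast
    then show False using t by (simp add: algebra_simps)
  qed
  then show ?thesis using M unfolding maximal_ideal_def prime_ideal_def by blast
qed

lemma exists_maximal:
  fixes I :: "'a::comm_ring_1 set"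
  assumes I: "is_ideal I" "1 \<notin> I"
  shows "\<exists>M. maximal_ideal M \<and> I \<subseteq> M"
proof -
  define A where "A = {J. is_ideal J \<and> I \<subseteq> J \<and> 1 \<notin> J}"
  have "\<exists>M\<in>A. \<forall>X\<in>A. M \<subseteq> X \<longrightarrow> X = M"
  proof (rule subset_Zorn_nonempty)
    show "A \<noteq> {}" using I unfolding A_def by blast
  next
    fix C assume C: "C \<noteq> {}" "subset.chain A C"
    have CA: "C \<subseteq> A" and ch: "\<And>X Y. X \<in> C \<Longrightarrow> Y \<in> C \<Longrightarrow> X \<subseteq> Y \<or> Y \<subseteq> X"
      using C(2) unfolding subset.chain_def by auto
    have "is_ideal (\<Union>C)" unfolding is_ideal_def
    proof (intro conjI ballI allI)
      show "0 \<in> \<Union>C" using C CA unfolding A_def is_ideal_def by blast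
    next
      fix x y assume "x \<in> \<Union>C" "y \<in> \<Union>C"
      then obtain X Y where XY: "x \<in> X" "y \<in> Y" "X \<in> C" "Y \<in> C" by blast
      then have "x \<in> X \<union> Y" "y \<in> X \<union> Y" "X \<union> Y \<in> C"
        using ch[OF XY(3,4)] by (auto simp: sup.absorb1 sup.absorb2)
      then show "x + y \<in> \<Union>C" using CA unfolding A_def is_ideal_def by blast
    next
      fix r x assume "x \<in> \<Union>C"
      then show "r * x \<in> \<Union>C" using CA unfolding A_def is_ideal_def by blast
    qed
    then show "\<Union>C \<in> A" using C CA unfolding A_def by auto
  qed
  then obtain M where M: "M \<in> A" "\<And>X. X \<in> A \<Longrightarrow> M \<subseteq> X \<Longrightarrow> X = M" by blast
  have "maximal_ideal M" unfolding maximal_ideal_def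
  proof (intro conjI allI impI)
    show "is_ideal M" "M \<noteq> UNIV" using M unfolding A_def by auto
  next
    fix J assume J: "is_ideal J \<and> M \<subseteq> J"
    show "J = M \<or> J = UNIV"
    proof (cases "1 \<in> J")
      case True then show ?thesis using ideal_one J by blast
    next
      case False then have "J \<in> A" using J M unfolding A_def by auto
      then show ?thesis using M J by blast
    qed
  qed
  then show ?thesis using M unfolding A_def by blast
qed

section \<open>Polynomials with coefficients in an ideal\<close>

text \<open>\<open>coeffs_in A p\<close>: all coefficients of \<open>p\<close> lie in \<open>A\<close>, i.e. \<open>p\<close> belongs to the extended
  ideal \<open>A[X]\<close>.\<close>
definition coeffs_in :: "'a::comm_ring_1 set \<Rightarrow> 'a poly \<Rightarrow> bool" where
  "coeffs_in A p \<longleftrightarrow> (\<forall>i. coeff p i \<in> A)"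

lemma coeffs_in_0: "is_ideal A \<Longrightarrow> coeffs_in A 0"
  by (simp add: coeffs_in_def idealD)

lemma coeffs_in_add: "is_ideal A \<Longrightarrow> coeffs_in A p \<Longrightarrow> coeffs_in A q \<Longrightarrow> coeffs_in A (p + q)"
  by (simp add: coeffs_in_def idealD)

lemma coeffs_in_diff: "is_ideal A \<Longrightarrow> coeffs_in A p \<Longrightarrow> coeffs_in A q \<Longrightarrow> coeffs_in A (p - q)"
  by (simp add: coeffs_in_def idealD)

lemma coeffs_in_uminus: "is_ideal A \<Longrightarrow> coeffs_in A p \<Longrightarrow> coeffs_in A (- p)"
  by (simp add: coeffs_in_def idealD)

lemma coeffs_in_smult: "is_ideal A \<Longrightarrow> coeffs_in A p \<Longrightarrow> coeffs_in A (smult c p)"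
  by (simp add: coeffs_in_def idealD)

lemma coeffs_in_const_iff: "is_ideal A \<Longrightarrow> coeffs_in A [:a:] \<longleftrightarrow> a \<in> A"
  unfolding coeffs_in_def by (auto simp: coeff_pCons idealD split: nat.split)

lemma coeffs_in_monom: "is_ideal A \<Longrightarrow> c \<in> A \<Longrightarrow> coeffs_in A (monom c n)"
  by (simp add: coeffs_in_def coeff_monom idealD)

lemma coeffs_in_mult: "is_ideal A \<Longrightarrow> coeffs_in A p \<Longrightarrow> coeffs_in A (q * p)"
  unfolding coeffs_in_def coeff_mult by (auto intro!: ideal_sum idealD(3))

lemma coeffs_in_prod: "coeffs_in A p \<Longrightarrow> coeffs_in B q \<Longrightarrow> coeffs_in (ideal_prod A B) (p * q)"
  unfolding coeffs_in_def coeff_mult by (auto intro!: ideal_sum ideal_prod_ideal ideal_prod_mem)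

lemma coeffs_in_mono: "A \<subseteq> B \<Longrightarrow> coeffs_in A p \<Longrightarrow> coeffs_in B p"
  unfolding coeffs_in_def by blast

definition plus_ext :: "'a::comm_ring_1 poly set \<Rightarrow> 'a set \<Rightarrow> 'a poly set" where
  "plus_ext J A = {r + s | r s. r \<in> J \<and> coeffs_in A s}"

lemma plus_ext_ideal:
  assumes iJ: "is_ideal J" and iA: "is_ideal A"
  shows "is_ideal (plus_ext J A)"
  unfolding is_ideal_def
proof (intro conjI ballI allI)
  show "0 \<in> plus_ext J A" unfolding plus_ext_def using idealD(1)[OF iJ] coeffs_in_0[OF iA] by force
next
  fix x y assume "x \<in> plus_ext J A" "y \<in> plus_ext J A"
  then obtain r1 s1 r2 s2 where h: "x = r1 + s1" "y = r2 + s2" "r1 \<in> J" "r2 \<in> J"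
    "coeffs_in A s1" "coeffs_in A s2" unfolding plus_ext_def by blast
  have "x + y = (r1 + r2) + (s1 + s2)" using h by (simp add: algebra_simps)
  then show "x + y \<in> plus_ext J A"
    unfolding plus_ext_def using h idealD(2)[OF iJ] coeffs_in_add[OF iA] by blast
next
  fix c x assume "x \<in> plus_ext J A"
  then obtain r s where h: "x = r + s" "r \<in> J" "coeffs_in A s" unfolding plus_ext_def by blast
  have "c * x = c * r + c * s" using h by (simp add: algebra_simps)
  then show "c * x \<in> plus_ext J A"
    unfolding plus_ext_def using h idealD(3)[OF iJ] coeffs_in_mult[OF iA] by blast
qed

lemma plus_ext_left: "is_ideal A \<Longrightarrow> r \<in> J \<Longrightarrow> r \<in> plus_ext J A"
  unfolding plus_ext_def using coeffs_in_0 by force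

lemma plus_ext_right: "is_ideal J \<Longrightarrow> coeffs_in A s \<Longrightarrow> s \<in> plus_ext J A"
  unfolding plus_ext_def using idealD(1) by force

lemma principal_ideal: "is_ideal (range (\<lambda>v. f * v))"
  unfolding is_ideal_def
proof (intro conjI ballI allI)
  show "0 \<in> range (\<lambda>v. f * v)" using rangeI[of "\<lambda>v. f * v" 0] by simp
  fix x y assume "x \<in> range (\<lambda>v. f * v)" "y \<in> range (\<lambda>v. f * v)"
  then show "x + y \<in> range (\<lambda>v. f * v)" by (auto simp: distrib_left[symmetric])
next
  fix r x assume "x \<in> range (\<lambda>v. f * v)"
  then show "r * x \<in> range (\<lambda>v. f * v)" by (auto simp: mult.left_commute)
qed

lemma const_in_iff_contract: "[:c:] \<in> Q \<longleftrightarrow> c \<in> contract Q"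
  by (simp add: contract_def)

lemma contract_ideal:
  assumes "is_ideal I" shows "is_ideal (contract I)"
  unfolding is_ideal_def contract_def
proof (intro conjI ballI allI; clarsimp)
  show "0 \<in> I" using idealD(1)[OF assms] by (simp add: zero_poly_def)
  fix x y assume "[:x:] \<in> I" "[:y:] \<in> I"
  then show "[:x + y:] \<in> I" using idealD(2)[OF assms] by fastforce
next
  fix r x assume "[:x:] \<in> I"
  then show "[:r * x:] \<in> I" using idealD(3)[OF assms, of "[:x:]" "[:r:]"] by (simp add: mult.commute)
qed

lemma contract_prime:
  assumes "prime_ideal Q" shows "prime_ideal (contract Q)"
  unfolding prime_ideal_def
proof (intro conjI allI impI)
  show "is_ideal (contract Q)" using contract_ideal prime_ideal_D(1)[OF assms] by blast
  show "contract Q \<noteq> UNIV" using prime_ideal_D(2)[OF assms] by (auto simp: contract_def one_pCons)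
  fix a b assume "a * b \<in> contract Q"
  then have "[:a:] * [:b:] \<in> Q" by (simp add: contract_def mult.commute)
  then show "a \<in> contract Q \<or> b \<in> contract Q"
    using prime_ideal_D(3)[OF assms] by (simp add: contract_def)
qed

lemma coeffs_in_contract:
  assumes "is_ideal Q" "coeffs_in (contract Q) p" shows "p \<in> Q"
proof -
  have "monom (coeff p i) i \<in> Q" for i
  proof -
    have "[:coeff p i:] \<in> Q" using assms(2) by (simp add: coeffs_in_def contract_def)
    then have "[:coeff p i:] * monom 1 i \<in> Q" by (rule idealD(4)[OF assms(1)])
    then show ?thesis by (simp add: smult_monom)
  qed
  then have "(\<Sum>i\<le>degree p. monom (coeff p i) i) \<in> Q" by (intro ideal_sum[OF assms(1)])
  then show ?thesis by (simp add: poly_as_sum_of_monoms)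
qed

lemma ideal_pow_contract_subset: "ideal_pow (contract I) t \<subseteq> contract (ideal_pow I t)"
proof (induction t)
  case 0 then show ?case by (simp add: contract_def)
next
  case (Suc t)
  have "ideal_prod (ideal_pow (contract I) t) (contract I) \<subseteq> contract (ideal_prod (ideal_pow I t) I)"
  proof (rule ideal_prod_least[OF contract_ideal[OF ideal_prod_ideal]])
    fix a b assume "a \<in> ideal_pow (contract I) t" "b \<in> contract I"
    then have "[:a:] * [:b:] \<in> ideal_prod (ideal_pow I t) I"
      using Suc by (intro ideal_prod_mem) (auto simp: contract_def)
    then show "a * b \<in> contract (ideal_prod (ideal_pow I t) I)" by (simp add: contract_def mult.commute)
  qed
  then show ?case by simp
qed

lemma top_coeff_outside:
  assumes "is_ideal A" "\<not> coeffs_in A p"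
  obtains d where "coeff p d \<notin> A" "\<And>i. i > d \<Longrightarrow> coeff p i \<in> A"
proof -
  define S where "S = {i. coeff p i \<notin> A}"
  have "S \<subseteq> {..degree p}" unfolding S_def using idealD(1)[OF assms(1)]
    by (auto simp: not_le) (metis coeff_eq_0 not_le)
  then have fin: "finite S" using finite_subset by blast
  have "S \<noteq> {}" using assms(2) unfolding S_def coeffs_in_def by auto
  then have "Max S \<in> S" "\<forall>i>Max S. coeff p i \<in> A"
    using Max_in[OF fin] Max_ge[OF fin] unfolding S_def by (auto simp: not_le[symmetric])
  then show ?thesis using that unfolding S_def by blast
qed

lemma top_coeff_mult:
  assumes P: "prime_ideal P"
    and v: "\<And>i. i > d \<Longrightarrow> coeff v i \<in> P" and w: "\<And>j. j > e \<Longrightarrow> coeff w j \<in> P"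
  shows "coeff (v * w) (d + e) - coeff v d * coeff w e \<in> P"
proof -
  have iP: "is_ideal P" using prime_ideal_D(1)[OF P] .
  have "coeff (v * w) (d + e) = coeff v d * coeff w (d + e - d)
      + (\<Sum>i\<in>{..d+e} - {d}. coeff v i * coeff w (d + e - i))"
    unfolding coeff_mult by (rule sum.remove) auto
  moreover have "(\<Sum>i\<in>{..d+e} - {d}. coeff v i * coeff w (d + e - i)) \<in> P"
  proof (rule ideal_sum[OF iP])
    fix i assume "i \<in> {..d+e} - {d}"
    then have "i > d \<or> d + e - i > e" by auto
    then show "coeff v i * coeff w (d + e - i) \<in> P" using v w idealD(3,4)[OF iP] by blast
  qed
  ultimately show ?thesis by simp
qed

text \<open>Over the domain \<open>R/P\<close>, a polynomial dividing a nonzero constant is constant: if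
  \<open>b w \<equiv> c\<close> modulo \<open>P[X]\<close> with \<open>c \<notin> P\<close>, then all non-constant coefficients of \<open>b\<close> lie in \<open>P\<close>.\<close>
lemma divisor_of_const_mod_prime:
  assumes P: "prime_ideal P" and bw: "coeffs_in P (b * w - [:c:])" and c: "c \<notin> P"
    and i: "i > 0"
  shows "coeff b i \<in> P"
proof (cases "coeffs_in P b")
  case True then show ?thesis by (simp add: coeffs_in_def)
next
  case False
  have iP: "is_ideal P" using prime_ideal_D(1)[OF P] .
  have "\<not> coeffs_in P w"
  proof
    assume "coeffs_in P w"
    then have "coeffs_in P (b * w - (b * w - [:c:]))"
      by (intro coeffs_in_diff[OF iP] coeffs_in_mult[OF iP] bw)
    then show False using c coeffs_in_const_iff[OF iP] by simp
  qed
  then obtain e where e: "coeff w e \<notin> P" "\<And>j. j > e \<Longrightarrow> coeff w j \<in> P"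
    using top_coeff_outside[OF iP] by blast
  obtain d where d: "coeff b d \<notin> P" "\<And>i. i > d \<Longrightarrow> coeff b i \<in> P"
    using top_coeff_outside[OF iP False] by blast
  have "coeff b d * coeff w e \<notin> P" using prime_ideal_D(3)[OF P] d(1) e(1) by blast
  then have "coeff (b * w) (d + e) \<notin> P"
    using top_coeff_mult[OF P d(2) e(2)] idealD(6)[OF iP] by fastforce
  moreover have "coeff (b * w) (d + e) \<in> P" if "d + e > 0"
    using bw that unfolding coeffs_in_def by (metis coeff_diff coeff_pCons_Suc diff_zero gr0_conv_Suc
        pCons_0_0 add_0_left)
  ultimately have "d = 0" by blast
  then show ?thesis using d(2) i by blast
qed

lemma pseudo_division:
  fixes f g :: "'a::idom poly"
  assumes "g \<noteq> 0"
  obtains k h r where "smult (lead_coeff g ^ k) f = g * h + r" "r = 0 \<or> degree r < degree g"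
proof -
  obtain h r where "pseudo_divmod f g = (h, r)" by (cases "pseudo_divmod f g")
  from pseudo_divmod[OF assms this] that show ?thesis by blast
qed

lemma degree_minus_lead_term:
  assumes "degree p > 0"
  shows "degree (p - monom (lead_coeff p) (degree p)) < degree p"
proof -
  have "degree (p - monom (lead_coeff p) (degree p)) \<le> degree p - 1"
    using assms by (intro degree_le) (auto simp: coeff_monom coeff_eq_0)
  then show ?thesis using assms by linarith
qed

lemma coeffs_in_by_lead_term:
  assumes "is_ideal A" "lead_coeff p \<in> A" "coeffs_in A (p - monom (lead_coeff p) (degree p))"
  shows "coeffs_in A p"
  using coeffs_in_add[OF assms(1) assms(3) coeffs_in_monom[OF assms(1,2), of "degree p"]] by simp

lemma monic_mult_coeffs_in:
  fixes f :: "'a::comm_ring_1 poly"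
  assumes f1: "lead_coeff f = 1" and df: "degree f > 0" and iA: "is_ideal A"
  shows "(\<And>i. i > 0 \<Longrightarrow> coeff (f * v) i \<in> A) \<Longrightarrow> coeffs_in A v"
proof (induction "degree v" arbitrary: v rule: less_induct)
  case less
  define c where "c = lead_coeff v"
  have "coeff (f * v) (degree f + degree v) = c"
    using coeff_mult_degree_sum[of f v] f1 c_def by simp
  then have cA: "c \<in> A" using less.prems[of "degree f + degree v"] df by simp
  show ?case
  proof (cases "degree v = 0")
    case True
    then have "v = [:c:]" unfolding c_def by (metis degree_eq_zeroE lead_coeff_pCons(2) pCons_0_0)
    then show ?thesis using cA coeffs_in_const_iff[OF iA] by simp
  next
    case False
    define v' where "v' = v - monom c (degree v)"
    have fm: "coeffs_in A (f * monom c (degree v))" by (rule coeffs_in_mult[OF iA coeffs_in_monom[OF iA cA]])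
    have "coeff (f * v') i \<in> A" if "i > 0" for i
    proof -
      have "coeff (f * v') i = coeff (f * v) i - coeff (f * monom c (degree v)) i"
        unfolding v'_def by (simp add: algebra_simps)
      then show ?thesis using less.prems[OF that] fm idealD(6)[OF iA] unfolding coeffs_in_def by metis
    qed
    moreover have "degree v' < degree v" using False degree_minus_lead_term unfolding v'_def c_def by auto
    ultimately have "coeffs_in A v'" using less.hyps by blast
    then show ?thesis using coeffs_in_by_lead_term[OF iA cA[unfolded c_def]] unfolding v'_def c_def by blast
  qed
qed

lemma const_in_monic_plus_ext:
  fixes f :: "'a::comm_ring_1 poly"
  assumes f1: "lead_coeff f = 1" and df: "degree f > 0" and iA: "is_ideal A"
    and eq: "[:x:] = f * v + s" and sA: "coeffs_in A s"
  shows "x \<in> A"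
proof -
  have "coeffs_in A v"
  proof (rule monic_mult_coeffs_in[OF f1 df iA])
    fix i :: nat assume "i > 0"
    then have "coeff (f * v) i = - coeff s i" using arg_cong[OF eq, of "\<lambda>p. coeff p i"]
      by (cases i) (auto simp: eq_neg_iff_add_eq_0 add.commute)
    then show "coeff (f * v) i \<in> A" using sA idealD(5)[OF iA] unfolding coeffs_in_def by simp
  qed
  moreover have "x = coeff f 0 * coeff v 0 + coeff s 0"
    using arg_cong[OF eq, of "\<lambda>p. coeff p 0"] by (simp add: coeff_mult)
  ultimately show ?thesis using sA idealD(2,3)[OF iA] unfolding coeffs_in_def by metis
qed

section \<open>G-ideals\<close>

text \<open>A G-witness of a prime \<open>Q\<close> is an element \<open>u \<notin> Q\<close> such that every \<open>b \<notin> Q\<close> divides a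
  power of \<open>u\<close> modulo \<open>Q\<close>; it expresses \<open>Frac(A/Q) = (A/Q)[1/u]\<close>.\<close>
definition G_witness :: "'a::comm_ring_1 set \<Rightarrow> 'a \<Rightarrow> bool" where
  "G_witness Q u \<longleftrightarrow> u \<notin> Q \<and> (\<forall>b. b \<notin> Q \<longrightarrow> (\<exists>n c. c * b - u ^ n \<in> Q))"

text \<open>Every G-ideal has a G-witness: the product of the denominators of a finite set of
  algebra generators of the fraction field.\<close>
lemma G_ideal_witness:
  fixes Q :: "'a::comm_ring_1 set"
  assumes "G_ideal Q"
  obtains u where "G_witness Q u"
proof -
  have P: "prime_ideal Q" using assms unfolding G_ideal_def by blast
  have iQ: "is_ideal Q" using prime_ideal_D(1)[OF P] .
  obtain S where S: "finite S" "S \<subseteq> frac_dom Q"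
    "\<And>p. p \<in> frac_dom Q \<Longrightarrow> \<exists>q\<in>frac_alg Q S. frac_eq Q q p"
    using assms unfolding G_ideal_def by blast
  define u where "u = (\<Prod>s\<in>S. snd s)"
  have denom_dvd: "\<exists>n. snd x dvd u ^ n" if "x \<in> frac_alg Q S" for x
    using that
  proof (induction rule: frac_alg.induct)
    case (gen s)
    have "snd s dvd u" unfolding u_def using gen S(1) by (intro dvd_prodI)
    then show ?case by (intro exI[of _ 1]) simp
  next
    case (add a b c d)
    then obtain n m where "b dvd u ^ n" "d dvd u ^ m" by auto
    then have "b * d dvd u ^ (n + m)" unfolding power_add by (rule mult_dvd_mono)
    then show ?case by auto
  next
    case (mult a b c d)
    then obtain n m where "b dvd u ^ n" "d dvd u ^ m" by auto
    then have "b * d dvd u ^ (n + m)" unfolding power_add by (rule mult_dvd_mono)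
    then show ?case by auto
  qed auto
  have "u \<notin> Q" unfolding u_def
    by (rule prime_prod[OF P S(1)]) (use S(2) in \<open>auto simp: frac_dom_def\<close>)
  moreover have "\<exists>n c. c * b - u ^ n \<in> Q" if b: "b \<notin> Q" for b
  proof -
    have "(1, b) \<in> frac_dom Q" using b by (simp add: frac_dom_def)
    then obtain x where x: "x \<in> frac_alg Q S" "frac_eq Q x (1, b)" using S(3) by blast
    obtain n e where e: "u ^ n = snd x * e" using denom_dvd[OF x(1)] by (auto elim: dvdE)
    have "e * (fst x * b - snd x) \<in> Q"
      using x(2) idealD(3)[OF iQ] by (simp add: frac_eq_def)
    moreover have "e * (fst x * b - snd x) = (fst x * e) * b - u ^ n" by (simp add: e algebra_simps)
    ultimately show ?thesis by metis
  qed
  ultimately show ?thesis using that unfolding G_witness_def by blast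
qed

lemma G_witness_in_prime:
  assumes u: "G_witness Q u" and P: "prime_ideal P" and QP: "Q \<subseteq> P" and b: "b \<in> P" "b \<notin> Q"
  shows "u \<in> P"
proof -
  have iP: "is_ideal P" using prime_ideal_D(1)[OF P] .
  obtain n c where "c * b - u ^ n \<in> Q" using u b unfolding G_witness_def by blast
  then have "c * b - (c * b - u ^ n) \<in> P" using QP idealD(3,6)[OF iP] b(1) by blast
  then show ?thesis using prime_power[OF P] by simp
qed

text \<open>A prime G-ideal \<open>Q\<close> of \<open>R[X]\<close> is not the extension of its contraction \<open>q = Q \<inter> R\<close>:
  otherwise \<open>b = 1 - X u\<close> would be a unit modulo \<open>q[X]\<close> (it divides \<open>u\<^sup>n\<close>, hence \<open>(X u)\<^sup>n\<close>,
  hence \<open>1\<close>), forcing \<open>u \<in> q[X] \<subseteq> Q\<close>.\<close>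
lemma G_witness_not_extended:
  fixes Q :: "'a::comm_ring_1 poly set"
  assumes P: "prime_ideal Q" and u: "G_witness Q u"
  shows "\<exists>p\<in>Q. \<not> coeffs_in (contract Q) p"
proof (rule ccontr)
  let ?q = "contract Q"
  assume "\<not> ?thesis"
  then have ext: "\<And>p. p \<in> Q \<Longrightarrow> coeffs_in ?q p" by blast
  have iQ: "is_ideal Q" using prime_ideal_D(1)[OF P] .
  have pq: "prime_ideal ?q" using contract_prime[OF P] .
  have iq: "is_ideal ?q" "1 \<notin> ?q" using prime_ideal_D[OF pq] by auto
  define y where "y = [:0, 1:] * u"
  define b where "b = 1 - y"
  have "b \<notin> Q"
  proof
    assume "b \<in> Q"
    then have "coeff b 0 \<in> ?q" using ext unfolding coeffs_in_def by blast
    then show False using iq(2) by (simp add: b_def y_def)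
  qed
  then obtain n c where nc: "c * b - u ^ n \<in> Q" using u unfolding G_witness_def by blast
  define w where "w = (\<Sum>i<n. y ^ i) + [:0, 1:] ^ n * c"
  have "b * (\<Sum>i<n. y ^ i) = 1 - y ^ n" unfolding b_def by (rule one_diff_power_eq[symmetric])
  then have "b * w - [:1:] = [:0, 1:] ^ n * (c * b - u ^ n)"
    unfolding w_def y_def power_mult_distrib by (simp add: algebra_simps one_pCons)
  then have "coeffs_in ?q (b * w - [:1:])" using ext idealD(3)[OF iQ nc] by simp
  then have "coeff b (Suc j) \<in> ?q" for j by (rule divisor_of_const_mod_prime[OF pq _ iq(2)]) simp
  then have "- coeff u j \<in> ?q" for j by (simp add: b_def y_def)
  then have "coeffs_in ?q u" using idealD(5)[OF iq(1)] unfolding coeffs_in_def by fastforce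
  then show False using u coeffs_in_contract[OF iQ] unfolding G_witness_def by blast
qed

section \<open>Primes \<open>Q\<close> of \<open>R[X]\<close> strictly containing \<open>(Q \<inter> R)[X]\<close>\<close>

definition divides_const :: "'a::comm_ring_1 poly set \<Rightarrow> 'a poly \<Rightarrow> bool" where
  "divides_const Q v \<longleftrightarrow> (\<exists>w B. w \<notin> contract Q \<and> [:w:] - B * v \<in> Q)"

lemma divides_const_mod:
  assumes "is_ideal Q" "divides_const Q v'" "v' - C * v \<in> Q"
  shows "divides_const Q v"
proof -
  obtain w B where wB: "w \<notin> contract Q" "[:w:] - B * v' \<in> Q"
    using assms(2) unfolding divides_const_def by blast
  have "[:w:] - (B * C) * v = ([:w:] - B * v') + B * (v' - C * v)" by (simp add: algebra_simps)
  then have "[:w:] - (B * C) * v \<in> Q" using wB(2) assms(3) idealD(2,3)[OF assms(1)] by metis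
  then show ?thesis using wB(1) unfolding divides_const_def by blast
qed

locale min_poly =
  fixes Q :: "'a::idom poly set" and p :: "'a poly" and N :: nat
  assumes prime: "prime_ideal Q" and p_in: "p \<in> Q" and p_not_ext: "\<not> coeffs_in (contract Q) p"
    and p_deg: "degree p = N"
    and p_min: "\<And>r. r \<in> Q \<Longrightarrow> degree r < N \<Longrightarrow> coeffs_in (contract Q) r"

lemma exists_min_poly:
  fixes Q :: "'a::idom poly set"
  assumes P: "prime_ideal Q" and not_ext: "\<exists>p\<in>Q. \<not> coeffs_in (contract Q) p"
  obtains p N where "min_poly Q p N"
proof -
  let ?deg = "\<lambda>n. \<exists>p\<in>Q. \<not> coeffs_in (contract Q) p \<and> degree p = n"
  define N where "N = (LEAST n. ?deg n)"
  obtain p where p: "p \<in> Q" "\<not> coeffs_in (contract Q) p" "degree p = N"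
    using LeastI_ex[of ?deg] not_ext unfolding N_def by blast
  have "coeffs_in (contract Q) r" if "r \<in> Q" "degree r < N" for r
    using that not_less_Least[of "degree r" ?deg] unfolding N_def by blast
  then have "min_poly Q p N" using P p by unfold_locales auto
  then show ?thesis by (rule that)
qed

context min_poly
begin

abbreviation q where "q \<equiv> contract Q"
abbreviation a where "a \<equiv> lead_coeff p"

lemma iQ: "is_ideal Q" using prime_ideal_D(1)[OF prime] .
lemma pq: "prime_ideal q" using contract_prime[OF prime] .
lemma iq: "is_ideal q" using prime_ideal_D(1)[OF pq] .

lemma monom_in: "c \<in> q \<Longrightarrow> monom c n \<in> Q"
  by (rule coeffs_in_contract[OF iQ coeffs_in_monom[OF iq]])

lemma smult_in: "r \<in> Q \<Longrightarrow> smult c r \<in> Q"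
  using idealD(3)[OF iQ, of r "[:c:]"] by simp

lemma p_nonzero: "p \<noteq> 0"
  using p_not_ext coeffs_in_0[OF iq] by blast

lemma N_pos: "N > 0"
proof (rule ccontr)
  assume "\<not> N > 0"
  then obtain c where c: "p = [:c:]" using p_deg by (metis degree_eq_zeroE neq0_conv)
  then have "c \<in> q" using p_in by (simp add: contract_def)
  then show False using p_not_ext c coeffs_in_const_iff[OF iq] by simp
qed

text \<open>The leading coefficient of \<open>p\<close> lies outside \<open>q\<close>, by minimality of \<open>N\<close>.\<close>
lemma lead_notin: "a \<notin> q"
proof
  assume aq: "a \<in> q"
  have "p - monom a N \<in> Q" using p_in monom_in[OF aq] idealD(6)[OF iQ] by blast
  moreover have "degree (p - monom a N) < N"
    using degree_minus_lead_term N_pos p_deg by auto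
  ultimately have "coeffs_in q (p - monom a N)" by (rule p_min)
  then show False using coeffs_in_by_lead_term[OF iq aq] p_not_ext p_deg by blast
qed

text \<open>If \<open>v \<notin> Q\<close> has degree in \<open>(0, N)\<close>, and \<open>c p = v h + r\<close> is a division with \<open>c \<notin> q\<close>,
  then \<open>r \<notin> Q\<close>: otherwise \<open>h \<in> Q\<close>, and by minimality \<open>h, r \<in> q[X]\<close>, so \<open>c a \<in> q\<close>.\<close>
lemma remainder_notin:
  assumes v: "v \<notin> Q" "0 < degree v" "degree v < N" and c: "c \<notin> q"
    and div: "smult c p = v * h + r" "r = 0 \<or> degree r < degree v"
  shows "r \<notin> Q"
proof
  assume rQ: "r \<in> Q"
  have vh: "v * h = smult c p - r" using div(1) by simp
  then have "v * h \<in> Q" using smult_in[OF p_in] rQ idealD(6)[OF iQ] by metis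
  then have hQ: "h \<in> Q" using prime_ideal_D(3)[OF prime] v(1) by blast
  have "coeffs_in q h"
  proof (cases "h = 0")
    case True then show ?thesis using coeffs_in_0[OF iq] by simp
  next
    case False
    have "degree (smult c p) \<le> N" using degree_smult_le p_deg by metis
    moreover have "degree r \<le> N" using div(2) v(3) by auto
    ultimately have "degree (v * h) \<le> N" unfolding vh by (rule degree_diff_le)
    then have "degree h < N" using degree_mult_eq[of v h] False v(2) by (cases "v = 0") auto
    then show ?thesis using p_min hQ by blast
  qed
  moreover have "coeffs_in q r" using p_min rQ div(2) v(3) coeffs_in_0[OF iq] by auto
  ultimately have "coeffs_in q (smult c p)"
    unfolding div(1) by (intro coeffs_in_add[OF iq] coeffs_in_mult[OF iq])
  then have "c * a \<in> q" using p_deg unfolding coeffs_in_def by (metis coeff_smult)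
  then show False using prime_ideal_D(3)[OF pq] c lead_notin by blast
qed

text \<open>Every element outside \<open>Q\<close> divides a constant outside \<open>Q\<close> modulo \<open>Q\<close>; induction on the
  degree, reducing modulo \<open>p\<close>, stripping leading terms in \<open>q\<close>, or dividing \<open>p\<close> by \<open>v\<close>.\<close>
lemma nonmember_divides_const: "v \<notin> Q \<Longrightarrow> divides_const Q v"
proof (induction "degree v" arbitrary: v rule: less_induct)
  case less
  consider (high) "N \<le> degree v" | (const) "degree v = 0"
    | (lead_in) "degree v < N" "0 < degree v" "lead_coeff v \<in> q"
    | (lead_out) "degree v < N" "0 < degree v" "lead_coeff v \<notin> q"
    by fastforce
  then show ?case
  proof cases
    case high
    obtain k h r where khr: "smult (a ^ k) v = p * h + r" "r = 0 \<or> degree r < degree p"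
      using pseudo_division[OF p_nonzero] by metis
    have ph: "r - [:a ^ k:] * v \<in> Q"
      using khr(1) idealD(5)[OF iQ idealD(4)[OF iQ p_in]] by (simp add: algebra_simps)
    have "r \<notin> Q"
    proof
      assume "r \<in> Q"
      then have "[:a ^ k:] * v \<in> Q" using ph idealD(6)[OF iQ] by force
      then have "a ^ k \<in> q" using prime_ideal_D(3)[OF prime] less.prems const_in_iff_contract by blast
      then show False using prime_power[OF pq] lead_notin by blast
    qed
    then have "degree r < degree v" using khr(2) high p_deg idealD(1)[OF iQ] by auto
    then show ?thesis using less.hyps \<open>r \<notin> Q\<close> divides_const_mod[OF iQ _ ph] by blast
  next
    case const
    then obtain c where c: "v = [:c:]" by (metis degree_eq_zeroE)
    then have "c \<notin> q" "[:c:] - 1 * v \<in> Q" using less.prems idealD(1)[OF iQ] const_in_iff_contract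
      by auto
    then show ?thesis unfolding divides_const_def by blast
  next
    case lead_in
    define v' where "v' = v - monom (lead_coeff v) (degree v)"
    have mQ: "monom (lead_coeff v) (degree v) \<in> Q" by (rule monom_in[OF lead_in(3)])
    then have "v' - 1 * v \<in> Q" unfolding v'_def using idealD(5)[OF iQ] by simp
    moreover have "v' \<notin> Q"
      using less.prems mQ idealD(2)[OF iQ, of v'] unfolding v'_def by force
    moreover have "degree v' < degree v" unfolding v'_def by (rule degree_minus_lead_term[OF lead_in(2)])
    ultimately show ?thesis using less.hyps divides_const_mod[OF iQ] by blast
  next
    case lead_out
    have "v \<noteq> 0" using lead_out(2) by auto
    then obtain k h r where khr: "smult (lead_coeff v ^ k) p = v * h + r" "r = 0 \<or> degree r < degree v"
      using pseudo_division by metis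
    have "lead_coeff v ^ k \<notin> q" using prime_power[OF pq] lead_out(3) by blast
    then have "r \<notin> Q" using remainder_notin[OF less.prems lead_out(2,1) _ khr] by blast
    moreover have "r - (- h) * v = smult (lead_coeff v ^ k) p" using khr(1) by (simp add: algebra_simps)
    then have "r - (- h) * v \<in> Q" using smult_in[OF p_in] by simp
    moreover have "degree r < degree v" using khr(2) \<open>r \<notin> Q\<close> idealD(1)[OF iQ] by auto
    ultimately show ?thesis using less.hyps divides_const_mod[OF iQ] by blast
  qed
qed

text \<open>Lying over: a maximal \<open>M \<supseteq> q\<close> of \<open>R\<close> avoiding \<open>a\<close> is the contraction of a prime over \<open>Q\<close>.
  The key point is that \<open>Q + M[X]\<close> is proper: modulo \<open>M[X]\<close> a relation \<open>1 \<in> Q + M[X]\<close>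
  would make \<open>p\<close> divide a constant outside \<open>M\<close>, although its leading coefficient \<open>a \<notin> M\<close>.\<close>
lemma lying_over_proper:
  assumes M: "maximal_ideal M" and qM: "q \<subseteq> M" and aM: "a \<notin> M"
  shows "1 \<notin> plus_ext Q M"
proof
  assume "1 \<in> plus_ext Q M"
  then obtain r s where rs: "1 = r + s" "r \<in> Q" "coeffs_in M s" unfolding plus_ext_def by blast
  have PM: "prime_ideal M" using maximal_prime[OF M] .
  have iM: "is_ideal M" using prime_ideal_D(1)[OF PM] .
  obtain k h r' where khr: "smult (a ^ k) r = p * h + r'" "r' = 0 \<or> degree r' < degree p"
    using pseudo_division[OF p_nonzero] by metis
  have "r' = smult (a ^ k) r - p * h" using khr(1) by (simp add: algebra_simps)
  then have "r' \<in> Q" using smult_in[OF rs(2)] idealD(4)[OF iQ p_in] idealD(6)[OF iQ] by metis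
  then have "coeffs_in M r'" using p_min khr(2) p_deg coeffs_in_0[OF iq] coeffs_in_mono[OF qM] by blast
  moreover have "p * h - [:a ^ k:] = - (r' + smult (a ^ k) s)"
  proof -
    have "[:a ^ k:] = smult (a ^ k) (r + s)" unfolding rs(1)[symmetric] by simp
    then show ?thesis using khr(1) by (simp add: smult_add_right)
  qed
  ultimately have "coeffs_in M (p * h - [:a ^ k:])"
    using rs(3) coeffs_in_uminus[OF iM] coeffs_in_add[OF iM] coeffs_in_smult[OF iM] by metis
  moreover have "a ^ k \<notin> M" using prime_power[OF PM] aM by blast
  ultimately have "coeff p N \<in> M" using divisor_of_const_mod_prime[OF PM] N_pos by blast
  then show False using aM p_deg by simp
qed

lemma lying_over:
  assumes M: "maximal_ideal M" and qM: "q \<subseteq> M" and aM: "a \<notin> M"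
  obtains P where "prime_ideal P" "Q \<subseteq> P" "contract P = M"
proof -
  have iM: "is_ideal M" using M by (rule maximal_ideal_is_ideal)
  obtain P where P: "maximal_ideal P" "plus_ext Q M \<subseteq> P"
    using exists_maximal[OF plus_ext_ideal[OF iQ iM] lying_over_proper[OF assms]] by blast
  have PP: "prime_ideal P" using maximal_prime[OF P(1)] .
  have "Q \<subseteq> P" using plus_ext_left[OF iM] P(2) by blast
  moreover have "M \<subseteq> contract P"
    using plus_ext_right[OF iQ coeffs_in_const_iff[OF iM, THEN iffD2]] P(2)
    by (auto simp: contract_def)
  then have "contract P = M"
    using M contract_prime[OF PP] unfolding maximal_ideal_def prime_ideal_def by blast
  ultimately show ?thesis using that PP by blast
qed

text \<open>Let \<open>u\<close> be a G-witness
  and \<open>w - B u \<in> Q\<close> with \<open>w \<notin> q\<close>. If \<open>q\<close> were not maximal, the Hilbert property gives a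
  maximal \<open>M \<supset> q\<close> avoiding \<open>a w\<close>; a prime \<open>P\<close> over \<open>Q\<close> lying over \<open>M\<close> contains
  an element of \<open>M - q\<close>, hence \<open>u\<close>, hence \<open>w \<in> P \<inter> R = M\<close>.\<close>
lemma contract_maximal:
  assumes H: "hilbert_ring TYPE('a)" and u: "G_witness Q u"
  shows "maximal_ideal q"
proof (rule ccontr)
  assume not_max: "\<not> maximal_ideal q"
  obtain S where S: "\<And>M. M \<in> S \<Longrightarrow> maximal_ideal M" "q = \<Inter>S"
    using H pq unfolding hilbert_ring_def by metis
  have "u \<notin> Q" using u unfolding G_witness_def by blast
  then obtain w B where wB: "w \<notin> q" "[:w:] - B * u \<in> Q"
    using nonmember_divides_const unfolding divides_const_def by blast
  have "a * w \<notin> q" using prime_ideal_D(3)[OF pq] wB(1) lead_notin by blast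
  then obtain M where M: "M \<in> S" "a * w \<notin> M" unfolding S(2) by auto
  have Mm: "maximal_ideal M" using S(1)[OF M(1)] .
  have iM: "is_ideal M" using Mm by (rule maximal_ideal_is_ideal)
  have aM: "a \<notin> M" and wM: "w \<notin> M" using M(2) idealD(3,4)[OF iM] by auto
  have qM: "q \<subseteq> M" unfolding S(2) using M(1) by (rule Inter_lower)
  moreover have "M \<noteq> q" using not_max Mm by blast
  ultimately obtain m where m: "m \<in> M" "m \<notin> q" by blast
  obtain P where P: "prime_ideal P" "Q \<subseteq> P" "contract P = M" using lying_over[OF Mm qM aM] by blast
  have "[:m:] \<in> P" "[:m:] \<notin> Q" using m P(3) const_in_iff_contract by auto
  then have "u \<in> P" using G_witness_in_prime[OF u P(1,2)] by blast
  then have "([:w:] - B * u) + B * u \<in> P"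
    using wB(2) P(2) idealD(2,3)[OF prime_ideal_D(1)[OF P(1)]] by blast
  then have "w \<in> contract P" by (simp add: contract_def)
  then show False using wM P(3) by blast
qed

lemma monic_exists:
  assumes "maximal_ideal q"
  obtains f where "f \<in> Q" "lead_coeff f = 1" "degree f = N"
proof -
  obtain t where t: "t * a - 1 \<in> q" using maximal_inv[OF assms lead_notin] by blast
  define f where "f = smult t p - monom (t * a - 1) N"
  have "f \<in> Q" unfolding f_def by (rule idealD(6)[OF iQ smult_in[OF p_in] monom_in[OF t]])
  moreover have cN: "coeff f N = 1" unfolding f_def using p_deg by simp
  moreover have "degree f = N"
  proof (rule antisym)
    show "degree f \<le> N" unfolding f_def using p_deg
      by (intro degree_le) (auto simp: coeff_monom coeff_eq_0)
    show "N \<le> degree f" using cN by (intro le_degree) simp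
  qed
  ultimately show ?thesis using that by simp
qed

lemma mod_monic:
  assumes f: "f \<in> Q" "lead_coeff f = 1" "degree f = N" and r: "r \<in> Q"
  shows "r \<in> plus_ext (range (\<lambda>v. f * v)) q"
proof -
  have "f \<noteq> 0" using f(2) by auto
  then obtain k h s where khs: "smult (lead_coeff f ^ k) r = f * h + s" "s = 0 \<or> degree s < degree f"
    using pseudo_division by metis
  have rs: "r = f * h + s" using khs(1) f(2) by simp
  then have "s \<in> Q" using idealD(6)[OF iQ r idealD(4)[OF iQ f(1)]] by (metis add_diff_cancel_left')
  then have "coeffs_in q s" using p_min khs(2) f(3) coeffs_in_0[OF iq] by blast
  then show ?thesis using rs unfolding plus_ext_def by blast
qed

lemma pow_mod_monic:
  assumes f: "f \<in> Q" "lead_coeff f = 1" "degree f = N"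
  shows "ideal_pow Q t \<subseteq> plus_ext (range (\<lambda>v. f * v)) (ideal_pow q t)"
proof (induction t)
  case 0
  have "x = f * 0 + x" "coeffs_in UNIV x" for x by (simp_all add: coeffs_in_def)
  then show ?case unfolding plus_ext_def by fastforce
next
  case (Suc t)
  have "ideal_prod (ideal_pow Q t) Q \<subseteq> plus_ext (range (\<lambda>v. f * v)) (ideal_pow q (Suc t))"
  proof (rule ideal_prod_least[OF plus_ext_ideal[OF principal_ideal ideal_pow_ideal]])
    fix x y assume xy: "x \<in> ideal_pow Q t" "y \<in> Q"
    obtain v1 s1 where h1: "x = f * v1 + s1" "coeffs_in (ideal_pow q t) s1"
      using Suc xy(1) unfolding plus_ext_def by blast
    obtain v2 s2 where h2: "y = f * v2 + s2" "coeffs_in q s2"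
      using mod_monic[OF f xy(2)] unfolding plus_ext_def by blast
    have "x * y = f * (v1 * y + s1 * v2) + s1 * s2" using h1 h2 by (simp add: algebra_simps)
    moreover have "coeffs_in (ideal_pow q (Suc t)) (s1 * s2)" using coeffs_in_prod[OF h1(2) h2(2)] by simp
    ultimately show "x * y \<in> plus_ext (range (\<lambda>v. f * v)) (ideal_pow q (Suc t))"
      unfolding plus_ext_def by blast
  qed
  then show ?case by simp
qed

lemma contract_pow_subset:
  assumes "maximal_ideal q"
  shows "contract (ideal_pow Q t) \<subseteq> ideal_pow q t"
proof
  obtain f where f: "f \<in> Q" "lead_coeff f = 1" "degree f = N" using monic_exists[OF assms] by blast
  fix x assume "x \<in> contract (ideal_pow Q t)"
  then have "[:x:] \<in> plus_ext (range (\<lambda>v. f * v)) (ideal_pow q t)"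
    using pow_mod_monic[OF f] by (auto simp: contract_def)
  then obtain v s where "[:x:] = f * v + s" "coeffs_in (ideal_pow q t) s" unfolding plus_ext_def by blast
  then show "x \<in> ideal_pow q t"
    using const_in_monic_plus_ext[OF f(2) _ ideal_pow_ideal] f(3) N_pos by blast
qed

end

lemma G_ideal_contract:
  fixes Q :: "'a::idom poly set"
  assumes H: "hilbert_ring TYPE('a)" and G: "G_ideal Q"
  shows "maximal_ideal (contract Q)" "contract (ideal_pow Q t) \<subseteq> ideal_pow (contract Q) t"
proof -
  obtain u where u: "G_witness Q u" using G_ideal_witness[OF G] .
  have P: "prime_ideal Q" using G unfolding G_ideal_def by blast
  obtain p N where "min_poly Q p N" using exists_min_poly[OF P G_witness_not_extended[OF P u]] .
  then interpret min_poly Q p N .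
  show max: "maximal_ideal (contract Q)" using contract_maximal[OF H u] .
  show "contract (ideal_pow Q t) \<subseteq> ideal_pow (contract Q) t" using contract_pow_subset[OF max] .
qed

section \<open>Powers of finitely many maximal ideals\<close>

lemma avoid_prime:
  fixes MM :: "'a::comm_ring_1 set set"
  assumes fin: "finite MM" and mx: "\<And>m. m \<in> MM \<Longrightarrow> maximal_ideal m" and P: "prime_ideal P"
  obtains g where "g \<notin> P" "\<And>m. m \<in> MM \<Longrightarrow> m \<noteq> P \<Longrightarrow> g \<in> m"
proof -
  have "\<exists>h. h \<in> m \<and> h \<notin> P" if "m \<in> MM" "m \<noteq> P" for m
  proof (rule ccontr)
    assume "\<nexists>h. h \<in> m \<and> h \<notin> P"
    then have "m \<subseteq> P" by blast
    then show False using mx[OF that(1)] P that(2) unfolding maximal_ideal_def prime_ideal_def by blast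
  qed
  then obtain h where h: "\<And>m. m \<in> MM \<Longrightarrow> m \<noteq> P \<Longrightarrow> h m \<in> m \<and> h m \<notin> P" by metis
  define g where "g = (\<Prod>m\<in>MM - {P}. h m)"
  have "g \<notin> P" unfolding g_def using h fin by (intro prime_prod[OF P]) auto
  moreover have "g \<in> m" if "m \<in> MM" "m \<noteq> P" for m
    unfolding g_def using that h fin maximal_ideal_is_ideal[OF mx[OF that(1)]]
    by (intro ideal_prod_factor[of m _ m]) auto
  ultimately show ?thesis using that by blast
qed

text \<open>For \<open>x\<close> on the left,
  the colon ideal \<open>(J\<^sup>t : x)\<close>, \<open>J = \<Inter> m\<^sub>i\<close>, is not contained in any maximal ideal \<open>P\<close>: an element
  \<open>g \<notin> P\<close> lying in every \<open>m\<^sub>i \<noteq> P\<close> satisfies \<open>g\<^sup>t x \<in> J\<^sup>t\<close>.\<close>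
lemma Inter_pow_maximal:
  fixes MM :: "'a::comm_ring_1 set set"
  assumes fin: "finite MM" and mx: "\<And>m. m \<in> MM \<Longrightarrow> maximal_ideal m"
  shows "(\<Inter>m\<in>MM. ideal_pow m t) \<subseteq> ideal_pow (\<Inter>MM) t"
proof
  fix x assume x: "x \<in> (\<Inter>m\<in>MM. ideal_pow m t)"
  define J where "J = \<Inter>MM"
  have iJ: "is_ideal J" unfolding J_def using mx maximal_ideal_is_ideal by (blast intro: ideal_Inter)
  define K where "K = {r. x * r \<in> ideal_pow J t}"
  have iK: "is_ideal K" unfolding K_def by (rule ideal_colon_elem[OF ideal_pow_ideal])
  show "x \<in> ideal_pow (\<Inter>MM) t"
  proof (rule ccontr)
    assume "x \<notin> ideal_pow (\<Inter>MM) t"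
    then have "1 \<notin> K" unfolding K_def J_def by simp
    then obtain P where P: "maximal_ideal P" "K \<subseteq> P" using exists_maximal[OF iK] by blast
    have PP: "prime_ideal P" using maximal_prime[OF P(1)] .
    obtain g where g: "g \<notin> P" "\<And>m. m \<in> MM \<Longrightarrow> m \<noteq> P \<Longrightarrow> g \<in> m"
      using avoid_prime[OF fin mx PP] by blast
    have "g ^ t \<in> K"
    proof (cases "P \<in> MM")
      case True
      text \<open>\<open>x \<in> P\<^sup>t\<close> and \<open>g\<close> lies in \<open>J' = \<Inter>(MM - {P})\<close> with \<open>P J' \<subseteq> J\<close>.\<close>
      have "x * g ^ t \<in> ideal_pow J t"
      proof (rule ideal_pow_mult[OF iJ])
        fix y z assume "y \<in> P" "z \<in> \<Inter>(MM - {P})"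
        then show "y * z \<in> J" unfolding J_def
          using mx maximal_ideal_is_ideal idealD(3,4) by (metis Diff_iff InterD InterI singletonD)
      next
        show "x \<in> ideal_pow P t" using x True by blast
        show "g ^ t \<in> ideal_pow (\<Inter>(MM - {P})) t" using g(2) by (intro power_in_ideal_pow) blast
      qed
      then show ?thesis unfolding K_def by simp
    next
      case False
      then have "g ^ t \<in> ideal_pow J t" unfolding J_def using g(2) by (intro power_in_ideal_pow) blast
      then show ?thesis unfolding K_def using idealD(3)[OF ideal_pow_ideal] by blast
    qed
    then show False using P(2) prime_power[OF PP] g(1) by blast
  qed
qed

theorem theorem3p10:
  fixes I :: "'a::idom poly set"
  assumes "hilbert_ring TYPE('a)"
    and "radical_ideal I"
    and "\<exists>F. finite F \<and> F \<noteq> {} \<and> (\<forall>Q\<in>F. G_ideal Q) \<and> I = \<Inter>F"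
  shows "power_stable I"
  unfolding power_stable_def
proof (intro allI impI equalityI)
  fix t :: nat
  obtain F where F: "finite F" "\<And>Q. Q \<in> F \<Longrightarrow> G_ideal Q" "I = \<Inter>F"
    using assms(3) by blast
  have contract_I: "contract I = \<Inter>(contract ` F)" unfolding F(3) contract_def by auto
  have "contract (ideal_pow I t) \<subseteq> ideal_pow (contract Q) t" if "Q \<in> F" for Q
  proof -
    have "contract (ideal_pow I t) \<subseteq> contract (ideal_pow Q t)"
      using ideal_pow_mono[of I Q t] that F(3) by (auto simp: contract_def)
    then show ?thesis using G_ideal_contract(2)[OF assms(1) F(2)[OF that]] by blast
  qed
  then have "contract (ideal_pow I t) \<subseteq> (\<Inter>m\<in>contract ` F. ideal_pow m t)" by blast
  also have "\<dots> \<subseteq> ideal_pow (contract I) t" unfolding contract_I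
    using F(1) G_ideal_contract(1)[OF assms(1) F(2)] by (intro Inter_pow_maximal) auto
  finally show "contract (ideal_pow I t) \<subseteq> ideal_pow (contract I) t" .
  show "ideal_pow (contract I) t \<subseteq> contract (ideal_pow I t)" by (rule ideal_pow_contract_subset)
qed

end
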